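(* Let $n\ge1$ and let $\Phi:\mathbb{R}^{n+1}\to[0,+\infty)$ be a norm with dual norm $\Phi^o$. Then $\Phi(\widehat\xi,\xi_{n+1})\ge\Phi(\widehat\xi,0)$ for all $(\widehat\xi,\xi_{n+1})\in\mathbb{R}^n\times\mathbb{R}$ if and only if $\Phi^o(\widehat\xi^*,\xi^*_{n+1})\ge\Phi^o(\widehat\xi^*,0)$ for all $(\widehat\xi^*,\xi^*_{n+1})\in\mathbb{R}^n\times\mathbb{R}$.
   Context: A norm on $\mathbb{R}^m$ is a convex function $\Psi:\mathbb{R}^m\to[0,+\infty)$ with $\Psi(\lambda\xi)=|\lambda|\Psi(\xi)$ and $\Psi(\xi)\ge c|\xi|$ for some $c>0$; its dual norm is $\Psi^o(\xi^* )=\sup\{\xi^*\cdot\xi:\Psi(\xi)\le1\}$. (The stated property of $\Phi$ is what the paper calls "$\partial B_\Phi$ is a generalized graph in the vertical direction".) *)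

theory Defs
  imports "HOL-Analysis.Analysis"
begin

text \<open>We model R^(n+1) as R^n x R, i.e. the type (real^'n) \<times> real; the
  last component is the vertical coordinate. Since types are nonempty, n \<ge> 1.\<close>

definition is_norm :: "('a::euclidean_space \<Rightarrow> real) \<Rightarrow> bool" where
  "is_norm \<Psi> \<longleftrightarrow> convex_on UNIV \<Psi> \<and> (\<forall>x. \<Psi> x \<ge> 0)
     \<and> (\<forall>r x. \<Psi> (r *\<^sub>R x) = \<bar>r\<bar> * \<Psi> x)
     \<and> (\<exists>c>0. \<forall>x. \<Psi> x \<ge> c * norm x)"

definition dual_norm :: "('a::euclidean_space \<Rightarrow> real) \<Rightarrow> 'a \<Rightarrow> real" where
  "dual_norm \<Psi> xs = (SUP x\<in>{x. \<Psi> x \<le> 1}. xs \<bullet> x)"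

end

theory Submission
  imports Defs
begin

text \<open>If switching on the vertical coordinate never decreases \<Phi>, then replacing a
  unit vector (x, t) by (x, 0) stays in the unit ball and does not change its pairing with
  a horizontal covector (\<xi>h, 0); this bounds the dual norm of (\<xi>h, 0) by that of
  (\<xi>h, t). Conversely, \<Phi>(\<xi>h, 0) is attained by a norming functional (a, b) of dual
  norm at most 1, and its horizontal part (a, 0), still of dual norm at most 1, pairs with
  (\<xi>h, t) as (a, b) pairs with (\<xi>h, 0).\<close>

lemma convex_strict_sublevel_set:
  assumes "convex_on S f"
  shows "convex {x\<in>S. f x < c}"
proof (rule convexI)
  fix x y and u v :: real
  assume xy: "x \<in> {x\<in>S. f x < c}" "y \<in> {x\<in>S. f x < c}"
    and uv: "0 \<le> u" "0 \<le> v" "u + v = 1"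
  have "u *\<^sub>R x + v *\<^sub>R y \<in> S"
    using assms xy uv by (auto dest: convex_on_imp_convex simp: convex_def)
  moreover have "f (u *\<^sub>R x + v *\<^sub>R y) \<le> u * f x + v * f y"
    using assms xy uv by (auto simp: convex_on_def)
  moreover have "u * f x + v * f y < c"
    using xy uv by (intro convex_bound_lt) auto
  ultimately show "u *\<^sub>R x + v *\<^sub>R y \<in> {x\<in>S. f x < c}" by auto
qed

context
  fixes \<Phi> :: "'a::euclidean_space \<Rightarrow> real"
  assumes norm: "is_norm \<Phi>"
begin

lemma is_norm_nonneg: "\<Phi> x \<ge> 0"
  using norm unfolding is_norm_def by blast

lemma is_norm_scaleR: "\<Phi> (r *\<^sub>R x) = \<bar>r\<bar> * \<Phi> x"
  using norm unfolding is_norm_def by blast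

lemma is_norm_zero: "\<Phi> 0 = 0"
  using is_norm_scaleR[of 0 0] by simp

lemma is_norm_pos: "x \<noteq> 0 \<Longrightarrow> \<Phi> x > 0"
  using norm unfolding is_norm_def by (metis less_le_trans mult_pos_pos zero_less_norm_iff)

lemma convex_is_norm_open_unit_ball: "convex {x. \<Phi> x < 1}"
  using convex_strict_sublevel_set[of UNIV \<Phi> 1] norm by (simp add: is_norm_def)

lemma bdd_above_inner_is_norm_unit_ball: "bdd_above ((\<lambda>x. y \<bullet> x) ` {x. \<Phi> x \<le> 1})"
proof -
  obtain c where c: "c > 0" "\<And>x. c * norm x \<le> \<Phi> x"
    using norm unfolding is_norm_def by blast
  have "y \<bullet> x \<le> norm y / c" if "\<Phi> x \<le> 1" for x
  proof -
    have "norm x \<le> 1 / c"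
      using c that by (simp add: field_simps) (meson order_trans)
    then have "norm y * norm x \<le> norm y / c"
      by (metis mult_left_mono norm_ge_zero times_divide_eq_right mult_1_right)
    then show ?thesis
      using norm_cauchy_schwarz[of y x] by linarith
  qed
  then show ?thesis
    unfolding bdd_above_def by blast
qed

lemma inner_le_dual_norm: "\<Phi> x \<le> 1 \<Longrightarrow> z \<bullet> x \<le> dual_norm \<Phi> z"
  unfolding dual_norm_def by (rule cSUP_upper[OF _ bdd_above_inner_is_norm_unit_ball]) simp

lemma dual_norm_nonneg: "dual_norm \<Phi> z \<ge> 0"
  using inner_le_dual_norm[of 0 z] is_norm_zero by simp

lemma dual_norm_leI: "(\<And>x. \<Phi> x \<le> 1 \<Longrightarrow> y \<bullet> x \<le> c) \<Longrightarrow> dual_norm \<Phi> y \<le> c"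
  unfolding dual_norm_def by (rule cSUP_least) (auto intro: exI[of _ 0] simp: is_norm_zero)

lemma inner_le_dual_norm_mult: "z \<bullet> x \<le> dual_norm \<Phi> z * \<Phi> x"
proof (cases "x = 0")
  case True
  then show ?thesis by (simp add: is_norm_zero)
next
  case False
  then have pos: "\<Phi> x > 0" by (rule is_norm_pos)
  then have "\<Phi> ((1 / \<Phi> x) *\<^sub>R x) \<le> 1"
    by (simp add: is_norm_scaleR)
  then have "z \<bullet> ((1 / \<Phi> x) *\<^sub>R x) \<le> dual_norm \<Phi> z"
    by (rule inner_le_dual_norm)
  with pos show ?thesis
    by (simp add: divide_le_eq mult.commute)
qed

text \<open>The norming functional is the normal of a hyperplane separating the open unit
  ball from a unit vector.\<close>

lemma norming_functional_unit:
  assumes x: "\<Phi> x = 1"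
  obtains y where "dual_norm \<Phi> y \<le> 1" "y \<bullet> x = 1"
proof -
  obtain a b where "a \<noteq> 0" and below: "\<And>z. \<Phi> z < 1 \<Longrightarrow> a \<bullet> z \<le> b" and "b \<le> a \<bullet> x"
    using separating_hyperplane_sets[OF convex_is_norm_open_unit_ball convex_singleton, of x]
      x is_norm_zero by force
  have below_closed: "a \<bullet> z \<le> b" if "\<Phi> z \<le> 1" for z
  proof (rule field_le_mult_one_interval)
    fix r :: real
    assume "0 < r" "r < 1"
    with that is_norm_nonneg[of z] have "\<Phi> (r *\<^sub>R z) < 1"
      by (simp add: is_norm_scaleR) (smt (verit) mult_left_le)
    then show "r * (a \<bullet> z) \<le> b"
      using below by fastforce
  qed
  have "b > 0"
  proof -
    define e where "e = 1 / (\<Phi> a + 1)"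
    have "e > 0" "e * \<Phi> a < 1"
      using is_norm_nonneg[of a] by (auto simp: e_def divide_less_eq)
    then have "a \<bullet> (e *\<^sub>R a) \<le> b"
      by (intro below) (simp add: is_norm_scaleR)
    moreover have "a \<bullet> (e *\<^sub>R a) > 0"
      using \<open>e > 0\<close> \<open>a \<noteq> 0\<close> by simp
    ultimately show ?thesis by simp
  qed
  define y where "y = (1 / b) *\<^sub>R a"
  have dual: "dual_norm \<Phi> y \<le> 1"
    using below_closed \<open>b > 0\<close> by (intro dual_norm_leI) (simp add: y_def divide_le_eq)
  moreover have "y \<bullet> x \<ge> 1"
    using \<open>b \<le> a \<bullet> x\<close> \<open>b > 0\<close> by (simp add: y_def le_divide_eq)
  moreover have "y \<bullet> x \<le> 1"
    using inner_le_dual_norm_mult[of y x] dual x by simp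
  ultimately show ?thesis
    using that by simp
qed

lemma norming_functional:
  obtains y where "dual_norm \<Phi> y \<le> 1" "y \<bullet> x = \<Phi> x"
proof (cases "x = 0")
  case True
  have "dual_norm \<Phi> 0 \<le> 1"
    by (rule dual_norm_leI) simp
  with True that show ?thesis
    by (simp add: is_norm_zero)
next
  case False
  then have pos: "\<Phi> x > 0" by (rule is_norm_pos)
  then have "\<Phi> ((1 / \<Phi> x) *\<^sub>R x) = 1"
    by (simp add: is_norm_scaleR)
  then obtain y where "dual_norm \<Phi> y \<le> 1" "y \<bullet> ((1 / \<Phi> x) *\<^sub>R x) = 1"
    by (rule norming_functional_unit)
  with pos that show ?thesis
    by (simp add: divide_eq_eq)
qed

end

context
  fixes \<Phi> :: "'a::euclidean_space \<times> 'b::euclidean_space \<Rightarrow> real"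
  assumes norm: "is_norm \<Phi>"
begin

lemma dual_norm_horizontal_le:
  assumes vertical: "\<And>x t. \<Phi> (x, 0) \<le> \<Phi> (x, t)"
  shows "dual_norm \<Phi> (\<xi>, 0) \<le> dual_norm \<Phi> (\<xi>, \<tau>)"
proof (rule dual_norm_leI[OF norm])
  fix z
  assume "\<Phi> z \<le> 1"
  then obtain x t where z: "z = (x, t)" and "\<Phi> (x, 0) \<le> 1"
    using vertical by (metis order_trans prod.collapse)
  have "(\<xi>, 0) \<bullet> z = (\<xi>, \<tau>) \<bullet> (x, 0)"
    by (simp add: z)
  also have "\<dots> \<le> dual_norm \<Phi> (\<xi>, \<tau>)"
    using \<open>\<Phi> (x, 0) \<le> 1\<close> by (rule inner_le_dual_norm[OF norm])
  finally show "(\<xi>, 0) \<bullet> z \<le> dual_norm \<Phi> (\<xi>, \<tau>)" .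
qed

lemma is_norm_horizontal_le:
  assumes vertical: "\<And>\<xi> \<tau>. dual_norm \<Phi> (\<xi>, 0) \<le> dual_norm \<Phi> (\<xi>, \<tau>)"
  shows "\<Phi> (x, 0) \<le> \<Phi> (x, t)"
proof -
  obtain a b where ab: "dual_norm \<Phi> (a, b) \<le> 1" "(a, b) \<bullet> (x, 0) = \<Phi> (x, 0)"
    using norming_functional[OF norm] by (metis prod.collapse)
  have "\<Phi> (x, 0) = (a, 0) \<bullet> (x, t)"
    using ab by simp
  also have "\<dots> \<le> dual_norm \<Phi> (a, 0) * \<Phi> (x, t)"
    by (rule inner_le_dual_norm_mult[OF norm])
  also have "\<dots> \<le> \<Phi> (x, t)"
    using vertical[of a b] ab(1) is_norm_nonneg[OF norm, of "(x, t)"]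
    by (metis order_trans mult_left_le_one_le dual_norm_nonneg[OF norm])
  finally show ?thesis .
qed

end

theorem lemmaA3:
  fixes \<Phi> :: "(real ^ 'n) \<times> real \<Rightarrow> real"
  assumes "is_norm \<Phi>"
  shows "(\<forall>\<xi>h t. \<Phi> (\<xi>h, t) \<ge> \<Phi> (\<xi>h, 0)) \<longleftrightarrow>
         (\<forall>\<xi>h t. dual_norm \<Phi> (\<xi>h, t) \<ge> dual_norm \<Phi> (\<xi>h, 0))"
  using dual_norm_horizontal_le[OF assms] is_norm_horizontal_le[OF assms] by blast

end
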